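(* Let $\mathcal{G}=(V,\mathcal{E})$ be an $\ell$-uniform hypergraph with $m$ edges and $n$ vertices such that $n\ge3\ell$. Then there is a partition $V=V_1\dot\cup V_2$ with $|V_1|=\lfloor 2n/3\rfloor$ and $|V_2|=\lceil n/3\rceil$ such that at least $m\cdot\ell/2^{\ell+2}$ edges of $\mathcal{E}$ have exactly one vertex in $V_2$. *)

theory Defs
  imports Complex_Main
begin

definition uniform_hypergraph :: "nat \<Rightarrow> 'a set \<Rightarrow> 'a set set \<Rightarrow> bool" where
  "uniform_hypergraph l V E \<longleftrightarrow> finite V \<and> (\<forall>e\<in>E. e \<subseteq> V \<and> card e = l)"

end

theory Submission imports Defs begin

text \<open>
  Average over all \<open>k\<close>-subsets \<open>S\<close> of \<open>V\<close>, where \<open>k = \<lceil>n/3\<rceil>\<close>, the number of edges meeting \<open>S\<close>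
  in exactly one vertex. Each edge \<open>e\<close> is met once by \<open>l \<cdot> C(n - l, k - 1)\<close> of the \<open>C(n, k)\<close>
  subsets, and since \<open>k \<le> n/3 + 1\<close> and \<open>l \<le> n/3\<close>, removing the \<open>l\<close> vertices of \<open>e\<close> loses
  a factor of at most \<open>3 \<cdot> 2\<^sup>l\<^sup>-\<^sup>1\<close>. So the average, and hence some \<open>S = V\<^sub>2\<close>, is at least
  \<open>m l / 2\<^sup>l\<^sup>+\<^sup>2\<close>.
\<close>

lemma binomial_le_double_pred:
  fixes a r :: nat
  assumes "2 * r \<le> a"
  shows "a choose r \<le> 2 * ((a - 1) choose r)"
proof (cases "r = 0")
  case False
  have "(a - r) * (a choose r) = a * ((a - 1) choose r)"
    by (rule binomial_absorb_comp)
  also have "\<dots> \<le> 2 * (a - r) * ((a - 1) choose r)"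
    using assms by (intro mult_right_mono) auto
  finally have "(a - r) * (a choose r) \<le> (a - r) * (2 * ((a - 1) choose r))"
    by (simp add: mult_ac)
  then show ?thesis
    using assms False by simp
qed simp

lemma binomial_le_pow2_diff:
  fixes n r j :: nat
  assumes "2 * r + j \<le> n"
  shows "n choose r \<le> 2 ^ j * ((n - j) choose r)"
  using assms
proof (induction j)
  case (Suc j)
  have "n choose r \<le> 2 ^ j * ((n - j) choose r)"
    using Suc by simp
  also have "(n - j) choose r \<le> 2 * ((n - j - 1) choose r)"
    using Suc.prems by (intro binomial_le_double_pred) simp
  finally show ?case
    by (simp add: mult_ac)
qed simp

lemma binomial_le_three_pow2_choose:
  fixes n k l :: nat
  assumes "1 \<le> k" "1 \<le> l" "n \<le> 3 * k" "2 * k + l \<le> n + 1"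
  shows "n choose k \<le> 3 * 2 ^ (l - 1) * ((n - l) choose (k - 1))"
proof -
  have "k * (n choose k) = n * ((n - 1) choose (k - 1))"
    using binomial_absorption[of "k - 1" n] assms(1) by simp
  also have "\<dots> \<le> k * (3 * ((n - 1) choose (k - 1)))"
    using assms(3) by simp
  finally have "n choose k \<le> 3 * ((n - 1) choose (k - 1))"
    using assms(1) by simp
  also have "(n - 1) choose (k - 1) \<le> 2 ^ (l - 1) * ((n - 1 - (l - 1)) choose (k - 1))"
    using assms by (intro binomial_le_pow2_diff) simp
  finally show ?thesis
    using assms(2) by simp
qed

lemma card_times_choose_le_card_subsets_meeting_once:
  fixes V e :: "'a set" and k :: nat
  assumes "finite V" "e \<subseteq> V" "1 \<le> k"
  shows "card e * ((card V - card e) choose (k - 1))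
           \<le> card {S. S \<subseteq> V \<and> card S = k \<and> card (e \<inter> S) = 1}"
proof -
  have "finite e"
    using assms finite_subset by blast
  let ?D = "e \<times> {T. T \<subseteq> V - e \<and> card T = k - 1}"
  let ?h = "\<lambda>(x, T). insert x T"
  have "inj_on ?h ?D"
  proof (rule inj_onI, clarify)
    fix x T x' T'
    assume *: "x \<in> e" "T \<subseteq> V - e" "x' \<in> e" "T' \<subseteq> V - e" "insert x T = insert x' T'"
    have "{x} = e \<inter> insert x T" "{x'} = e \<inter> insert x' T'" "T = insert x T - e" "T' = insert x' T' - e"
      using * by auto
    with * show "x = x' \<and> T = T'"
      by simp
  qed
  moreover have "?h ` ?D \<subseteq> {S. S \<subseteq> V \<and> card S = k \<and> card (e \<inter> S) = 1}"
  proof clarify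
    fix x T
    assume *: "x \<in> e" "T \<subseteq> V - e" "card T = k - 1"
    then have T: "T \<subseteq> V" "x \<notin> T" "e \<inter> insert x T = {x}"
      by auto
    then have "finite T"
      using assms(1) finite_subset by blast
    with * T assms show "insert x T \<subseteq> V \<and> card (insert x T) = k \<and> card (e \<inter> insert x T) = 1"
      by auto
  qed
  ultimately have "card ?D \<le> card {S. S \<subseteq> V \<and> card S = k \<and> card (e \<inter> S) = 1}"
    using assms(1) by (simp add: card_image[symmetric] card_mono)
  then show ?thesis
    using assms \<open>finite e\<close> by (simp add: card_cartesian_product n_subsets card_Diff_subset)
qed

lemma sum_card_filter_swap:
  assumes "finite A" "finite B"
  shows "(\<Sum>a\<in>A. card {b\<in>B. P a b}) = (\<Sum>b\<in>B. card {a\<in>A. P a b})"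
proof -
  have "(\<Sum>a\<in>A. card {b\<in>B. P a b}) = (\<Sum>a\<in>A. \<Sum>b\<in>B. if P a b then 1 else 0)"
    using assms by (simp add: sum.inter_filter[symmetric])
  also have "\<dots> = (\<Sum>b\<in>B. \<Sum>a\<in>A. if P a b then 1 else 0)"
    by (rule sum.swap)
  also have "\<dots> = (\<Sum>b\<in>B. card {a\<in>A. P a b})"
    using assms by (simp add: sum.inter_filter[symmetric])
  finally show ?thesis .
qed

lemma exists_sum_le_card_mult:
  fixes f :: "'a \<Rightarrow> 'b::linordered_semidom"
  assumes "finite A" "A \<noteq> {}"
  shows "\<exists>x\<in>A. sum f A \<le> of_nat (card A) * f x"
proof -
  have "Max (f ` A) \<in> f ` A"
    using assms by simp
  then obtain x where "x \<in> A" "f x = Max (f ` A)"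
    by (metis imageE)
  then have "\<And>y. y \<in> A \<Longrightarrow> f y \<le> f x"
    using assms by simp
  then show ?thesis
    using \<open>x \<in> A\<close> sum_bounded_above by blast
qed

lemma uniform_hypergraph_exists_subset_meeting_once:
  assumes "uniform_hypergraph l V E" "1 \<le> k" "k \<le> card V"
  shows "\<exists>S\<subseteq>V. card S = k \<and>
           card E * l * ((card V - l) choose (k - 1))
             \<le> (card V choose k) * card {e\<in>E. card (e \<inter> S) = 1}"
proof -
  have "finite V" and edge: "\<And>e. e \<in> E \<Longrightarrow> e \<subseteq> V \<and> card e = l"
    using assms(1) unfolding uniform_hypergraph_def by auto
  then have "finite E"
    by (meson PowI finite_Pow_iff finite_subset subsetI)
  let ?K = "{S. S \<subseteq> V \<and> card S = k}"
  let ?f = "\<lambda>S. card {e\<in>E. card (e \<inter> S) = 1}"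
  have "finite ?K"
    using \<open>finite V\<close> by simp
  moreover have "?K \<noteq> {}"
    using assms(3) obtain_subset_with_card_n by blast
  ultimately obtain S where "S \<in> ?K" and S: "sum ?f ?K \<le> card ?K * ?f S"
    using exists_sum_le_card_mult[of ?K ?f] by auto
  have "card E * (l * ((card V - l) choose (k - 1))) = (\<Sum>e\<in>E. l * ((card V - l) choose (k - 1)))"
    by simp
  also have "\<dots> \<le> (\<Sum>e\<in>E. card {S\<in>?K. card (e \<inter> S) = 1})"
  proof (rule sum_mono)
    fix e
    assume "e \<in> E"
    then have "e \<subseteq> V" "card e = l"
      using edge by auto
    then show "l * ((card V - l) choose (k - 1)) \<le> card {S\<in>?K. card (e \<inter> S) = 1}"
      using card_times_choose_le_card_subsets_meeting_once[OF \<open>finite V\<close> \<open>e \<subseteq> V\<close> assms(2)]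
      by (simp add: conj_assoc)
  qed
  also have "\<dots> = sum ?f ?K"
    using sum_card_filter_swap[OF \<open>finite ?K\<close> \<open>finite E\<close>] by simp
  also have "\<dots> \<le> (card V choose k) * ?f S"
    using S \<open>finite V\<close> by (simp add: n_subsets)
  finally show ?thesis
    using \<open>S \<in> ?K\<close> by (auto simp: mult.assoc)
qed

lemma uniform_hypergraph_exists_third_meeting_once:
  assumes "uniform_hypergraph l V E" "3 * l \<le> card V"
  shows "\<exists>S\<subseteq>V. card S = (card V + 2) div 3 \<and>
           card E * l \<le> 2 ^ (l + 2) * card {e\<in>E. card (e \<inter> S) = 1}"
proof (cases "l = 0")
  case True
  have "(card V + 2) div 3 \<le> card V"
    by presburger
  then obtain S where "S \<subseteq> V" "card S = (card V + 2) div 3"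
    by (meson obtain_subset_with_card_n)
  with True show ?thesis
    by auto
next
  case False
  define n k where "n = card V" and "k = (card V + 2) div 3"
  define c where "c = (n - l) choose (k - 1)"
  have "1 \<le> k" "k \<le> n" "n \<le> 3 * k" "2 * k + l \<le> n + 1"
    using assms(2) False unfolding n_def k_def by auto
  then obtain S where "S \<subseteq> V" "card S = k"
    and S: "card E * l * c \<le> (n choose k) * card {e\<in>E. card (e \<inter> S) = 1}"
    using uniform_hypergraph_exists_subset_meeting_once[OF assms(1)] unfolding n_def c_def by blast
  have "n choose k \<le> 3 * 2 ^ (l - 1) * c"
    using binomial_le_three_pow2_choose \<open>1 \<le> k\<close> \<open>n \<le> 3 * k\<close> \<open>2 * k + l \<le> n + 1\<close> False
    unfolding c_def by simp
  also have "\<dots> \<le> 2 ^ (l + 2) * c"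
    using False by (cases l) simp_all
  finally have "n choose k \<le> 2 ^ (l + 2) * c" .
  then have "card E * l * c \<le> 2 ^ (l + 2) * c * card {e\<in>E. card (e \<inter> S) = 1}"
    using S by (meson le_trans mult_le_mono1)
  then have "c * (card E * l) \<le> c * (2 ^ (l + 2) * card {e\<in>E. card (e \<inter> S) = 1})"
    by (simp add: mult_ac)
  moreover have "c > 0"
    using \<open>k \<le> n\<close> \<open>2 * k + l \<le> n + 1\<close> unfolding c_def by simp
  ultimately show ?thesis
    using \<open>S \<subseteq> V\<close> \<open>card S = k\<close> unfolding k_def by auto
qed

lemma nat_ceiling_third: "nat \<lceil>real n / 3\<rceil> = (n + 2) div 3"
proof -
  have "\<lceil>real n / 3\<rceil> = int ((n + 2) div 3)"
    by (intro ceiling_unique) auto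
  then show ?thesis
    by simp
qed

lemma nat_floor_two_thirds: "nat \<lfloor>2 * real n / 3\<rfloor> = n - (n + 2) div 3"
proof -
  have "\<lfloor>2 * real n / 3\<rfloor> = int (n - (n + 2) div 3)"
    by (intro floor_unique) (auto simp: of_nat_diff)
  then show ?thesis
    by simp
qed

theorem propositionB1:
  fixes V :: "'a set" and E :: "'a set set" and l n m :: nat
  assumes "uniform_hypergraph l V E"
    and "card V = n" and "card E = m"
    and "n \<ge> 3 * l"
  shows "\<exists>V1 V2. V1 \<union> V2 = V \<and> V1 \<inter> V2 = {}
           \<and> card V1 = nat \<lfloor>2 * real n / 3\<rfloor> \<and> card V2 = nat \<lceil>real n / 3\<rceil>
           \<and> real (card {e\<in>E. card (e \<inter> V2) = 1}) \<ge> real m * real l / 2 ^ (l + 2)"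
proof -
  obtain S where "S \<subseteq> V" "card S = (n + 2) div 3"
    and S: "m * l \<le> 2 ^ (l + 2) * card {e\<in>E. card (e \<inter> S) = 1}"
    using uniform_hypergraph_exists_third_meeting_once assms by blast
  have "finite V"
    using assms(1) unfolding uniform_hypergraph_def by simp
  have "card (V - S) = nat \<lfloor>2 * real n / 3\<rfloor>"
    using \<open>S \<subseteq> V\<close> \<open>card S = _\<close> \<open>finite V\<close> assms(2)
    by (simp add: card_Diff_subset finite_subset nat_floor_two_thirds)
  moreover have "real m * real l / 2 ^ (l + 2) \<le> real (card {e\<in>E. card (e \<inter> S) = 1})"
    using of_nat_mono[OF S] by (simp add: divide_le_eq mult.commute)
  ultimately show ?thesis
    using \<open>S \<subseteq> V\<close> \<open>card S = _\<close> by (intro exI[of _ "V - S"] exI[of _ S]) (auto simp: nat_ceiling_third)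
qed

end
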